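(* Let $P\subseteq\mathbb{R}^n$ be an $n$-dimensional rational polytope, let $x\in\mathrm{relint}(\mathrm{core}(P))$, and let $F_1,\dots,F_t$ be the facets of $P$ with $d_{F_i}(x)=\mu(P)^{-1}$, with primitive inner normals $a_1,\dots,a_t$. Then $a_1,\dots,a_t$ positively span the linear subspace $K(P)^\perp$. Moreover, if $\mathrm{core}(P)=\{x\}$, then $\{y\in\mathbb{R}^n: d_{F_i}(y)\ge0 \text{ for all } i=1,\dots,t\}$ is a rational polytope containing $P$.
   Context: Write $P$ irredundantly as $P=\{x:\langle a_i,x\rangle\ge b_i\}$ with primitive $a_i\in(\mathbb{Z}^n)^*$, $b_i\in\mathbb{Q}$, each inequality defining a facet $F_i$; $d_{F_i}(x):=\langle a_i,x\rangle-b_i$, $d_P(x):=\min_i d_{F_i}(x)$, $P^{(s)}:=\{x:d_P(x)\ge s\}$. The $\mathbb{Q}$-codegree is $\mu(P):=(\sup\{s>0:P^{(s)}\neq\emptyset\})^{-1}$ and $\mathrm{core}(P):=P^{(1/\mu(P))}$. $K(P)$ is the linear subspace of $\mathbb{R}^n$ parallel to the affine hull of $\mathrm{core}(P)$, and $K(P)^\perp\subseteq(\mathbb{R}^n)^*$ is the set of linear functionals vanishing on $K(P)$. *)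

theory Defs
  imports "HOL-Analysis.Analysis"
begin

text \<open>Vectors in R^n are modelled as real^'n; the dual space is identified with
real^'n via the standard inner product, so a functional a acts as a \<bullet> x.\<close>

definition rational_vec :: "real^'n \<Rightarrow> bool" where
  "rational_vec v \<longleftrightarrow> (\<forall>j. v $ j \<in> \<rat>)"

definition integral_vec :: "real^'n \<Rightarrow> bool" where
  "integral_vec v \<longleftrightarrow> (\<forall>j. v $ j \<in> \<int>)"

text \<open>Primitive lattice vector: integral and not a proper positive integer multiple
of another integral vector (gcd of coordinates is 1).\<close>
definition primitive_vec :: "real^'n \<Rightarrow> bool" where
  "primitive_vec v \<longleftrightarrow> integral_vec v \<and>
     (\<forall>k::int. k > 0 \<longrightarrow> integral_vec ((1 / real_of_int k) *\<^sub>R v) \<longrightarrow> k = 1)"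

definition rational_polytope :: "(real^'n) set \<Rightarrow> bool" where
  "rational_polytope Q \<longleftrightarrow> (\<exists>V. finite V \<and> (\<forall>v\<in>V. rational_vec v) \<and> Q = convex hull V)"

definition dF :: "(nat \<Rightarrow> real^'n) \<Rightarrow> (nat \<Rightarrow> real) \<Rightarrow> nat \<Rightarrow> real^'n \<Rightarrow> real" where
  "dF a b i x = a i \<bullet> x - b i"

definition dP :: "nat \<Rightarrow> (nat \<Rightarrow> real^'n) \<Rightarrow> (nat \<Rightarrow> real) \<Rightarrow> real^'n \<Rightarrow> real" where
  "dP m a b x = Min ((\<lambda>i. dF a b i x) ` {..<m})"

definition Pshift :: "nat \<Rightarrow> (nat \<Rightarrow> real^'n) \<Rightarrow> (nat \<Rightarrow> real) \<Rightarrow> real \<Rightarrow> (real^'n) set" where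
  "Pshift m a b s = {x. dP m a b x \<ge> s}"

definition muQ :: "nat \<Rightarrow> (nat \<Rightarrow> real^'n) \<Rightarrow> (nat \<Rightarrow> real) \<Rightarrow> real" where
  "muQ m a b = inverse (Sup {s. s > 0 \<and> Pshift m a b s \<noteq> {}})"

definition core :: "nat \<Rightarrow> (nat \<Rightarrow> real^'n) \<Rightarrow> (nat \<Rightarrow> real) \<Rightarrow> (real^'n) set" where
  "core m a b = Pshift m a b (inverse (muQ m a b))"

definition Kspace :: "nat \<Rightarrow> (nat \<Rightarrow> real^'n) \<Rightarrow> (nat \<Rightarrow> real) \<Rightarrow> (real^'n) set" where
  "Kspace m a b = {u - v | u v. u \<in> affine hull (core m a b) \<and> v \<in> affine hull (core m a b)}"

definition perp :: "(real^'n) set \<Rightarrow> (real^'n) set" where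
  "perp V = {w. \<forall>v\<in>V. w \<bullet> v = 0}"

definition pos_span :: "nat set \<Rightarrow> (nat \<Rightarrow> real^'n) \<Rightarrow> (real^'n) set" where
  "pos_span T a = {(\<Sum>i\<in>T. c i *\<^sub>R a i) | c. \<forall>i\<in>T. c i \<ge> 0}"

end

theory Submission
  imports Defs
begin

text \<open>Write \<open>s = \<mu>(P)\<inverse>\<close>, so that \<open>core(P)\<close> is the polyhedron
  \<open>C = {y. \<forall>i. b\<^sub>i + s \<le> \<langle>a\<^sub>i, y\<rangle>}\<close>. A constraint that is active at a point of the
  relative interior of \<open>C\<close> is active on all of \<open>C\<close>, so its normal annihilates \<open>K(P)\<close>.
  Conversely, if \<open>w \<in> K(P)\<^sup>\<perp>\<close> lay outside the cone spanned by the active normals, Farkas'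
  lemma would give a direction \<open>u\<close> with \<open>\<langle>a\<^sub>i, u\<rangle> \<ge> 0\<close> for the active \<open>i\<close> and
  \<open>\<langle>w, u\<rangle> < 0\<close>; a small step from \<open>x\<close> along \<open>u\<close> stays in \<open>C\<close>, so
  \<open>u \<in> K(P)\<close>, a contradiction.

  If \<open>core(P) = {x}\<close> then \<open>K(P) = 0\<close>, so the active normals positively span the whole space
  and the polyhedron they cut out is bounded. Its vertices are the unique solutions of rational
  linear systems, hence rational. Only the inequality description of \<open>P\<close> and the rationality
  of the data are used.\<close>

lemma det_in_Rats:
  fixes A :: "real^'n^'n"
  assumes "\<And>i j. A$i$j \<in> \<rat>"
  shows "det A \<in> \<rat>"
  unfolding det_def using assms by (intro Rats_sum Rats_mult Rats_prod) auto

text \<open>The Gram matrix of the \<open>a i\<close> is rational and, by the kernel condition, invertible;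
  Cramer's rule then expresses \<open>v\<close> through rational determinants.\<close>
lemma rational_vec_unique_solution:
  fixes a :: "'i \<Rightarrow> real^'n"
  assumes fin: "finite J" and ra: "\<forall>i\<in>J. rational_vec (a i)" and rc: "\<forall>i\<in>J. c i \<in> \<rat>"
    and sol: "\<forall>i\<in>J. a i \<bullet> v = c i" and ker: "\<forall>z. (\<forall>i\<in>J. a i \<bullet> z = 0) \<longrightarrow> z = 0"
  shows "rational_vec v"
proof -
  define G where "G = ((\<chi> r s. \<Sum>i\<in>J. a i $ r * a i $ s) :: real^'n^'n)"
  have Gz: "G *v z = (\<Sum>i\<in>J. (a i \<bullet> z) *\<^sub>R a i)" for z
    by (simp add: G_def vec_eq_iff matrix_vector_mult_def inner_vec_def sum_component
        sum_distrib_left sum_distrib_right sum.swap[of _ J] mult.assoc mult.left_commute mult.commute)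
  have "z = 0" if "G *v z = 0" for z
  proof -
    have "(\<Sum>i\<in>J. (a i \<bullet> z)\<^sup>2) = z \<bullet> (G *v z)"
      by (simp add: Gz inner_sum_right power2_eq_square inner_commute)
    with that have "\<forall>i\<in>J. (a i \<bullet> z)\<^sup>2 = 0"
      using sum_nonneg_eq_0_iff[OF fin, of "\<lambda>i. (a i \<bullet> z)\<^sup>2"] by simp
    with ker show "z = 0" by simp
  qed
  then obtain B where "B ** G = mat 1" using matrix_left_invertible_ker by blast
  then have detG: "det G \<noteq> 0" by (meson invertible_det_nz invertible_left_inverse)
  have ratG: "G$i$j \<in> \<rat>" for i j
    unfolding G_def using ra by (auto simp: rational_vec_def intro!: Rats_sum Rats_mult)
  have ratGv: "(G *v v)$i \<in> \<rat>" for i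
    unfolding Gz using sol ra rc by (auto simp: rational_vec_def sum_component intro!: Rats_sum Rats_mult)
  have cramer_v: "v = (\<chi> k. det (\<chi> i j. if j = k then (G *v v)$i else G$i$j) / det G)"
    using cramer[OF detG] by blast
  have "v$k = det (\<chi> i j. if j = k then (G *v v)$i else G$i$j) / det G" for k
    by (subst cramer_v) simp
  moreover have "det (\<chi> i j. if j = k then (G *v v)$i else G$i$j) \<in> \<rat>" for k
    by (rule det_in_Rats) (simp add: ratG ratGv)
  ultimately show ?thesis
    unfolding rational_vec_def using det_in_Rats[OF ratG] by (simp add: Rats_divide)
qed

lemma eventually_feasible_direction:
  fixes a :: "'i \<Rightarrow> 'a::real_inner"
  assumes "finite I" and "\<forall>i\<in>I. c i \<le> a i \<bullet> x" and "\<forall>i\<in>I. a i \<bullet> x = c i \<longrightarrow> 0 \<le> a i \<bullet> u"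
  shows "\<forall>\<^sub>F t in at_right 0. \<forall>i\<in>I. c i \<le> a i \<bullet> (x + t *\<^sub>R u)"
proof (rule eventually_ball_finite[OF assms(1)], intro ballI)
  fix i assume i: "i \<in> I"
  show "\<forall>\<^sub>F t in at_right 0. c i \<le> a i \<bullet> (x + t *\<^sub>R u)"
  proof (cases "a i \<bullet> x = c i")
    case True
    with assms(3) i show ?thesis
      by (auto simp: inner_add_right intro: eventually_mono[OF eventually_at_right_less])
  next
    case False
    with assms(2) i have "c i < a i \<bullet> x" by force
    moreover have "((\<lambda>t. a i \<bullet> (x + t *\<^sub>R u)) \<longlongrightarrow> a i \<bullet> (x + 0 *\<^sub>R u)) (at_right 0)"
      by (intro tendsto_intros)
    ultimately have "\<forall>\<^sub>F t in at_right 0. c i < a i \<bullet> (x + t *\<^sub>R u)"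
      by (simp add: order_tendstoD(1))
    then show ?thesis by (rule eventually_mono) simp
  qed
qed

lemma extreme_point_active_kernel:
  fixes a :: "'i \<Rightarrow> 'a::real_inner"
  assumes "finite I" and v: "v extreme_point_of {y. \<forall>i\<in>I. c i \<le> a i \<bullet> y}"
    and "\<forall>i\<in>I. a i \<bullet> v = c i \<longrightarrow> a i \<bullet> z = 0"
  shows "z = 0"
proof (rule ccontr)
  assume "z \<noteq> 0"
  let ?Q = "{y. \<forall>i\<in>I. c i \<le> a i \<bullet> y}"
  have vQ: "v \<in> ?Q" using v by (simp add: extreme_point_of_def)
  have "\<forall>\<^sub>F t in at_right 0. v + t *\<^sub>R z \<in> ?Q"
    using eventually_feasible_direction[OF \<open>finite I\<close>, of c a v z] vQ assms(3) by simp
  moreover have "\<forall>\<^sub>F t in at_right 0. v - t *\<^sub>R z \<in> ?Q"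
    using eventually_feasible_direction[OF \<open>finite I\<close>, of c a v "- z"] vQ assms(3) by simp
  ultimately have "\<forall>\<^sub>F t in at_right 0. 0 < t \<and> v + t *\<^sub>R z \<in> ?Q \<and> v - t *\<^sub>R z \<in> ?Q"
    by (intro eventually_conj eventually_at_right_less)
  then obtain t where t: "0 < t" "v + t *\<^sub>R z \<in> ?Q" "v - t *\<^sub>R z \<in> ?Q"
    using eventually_happens'[OF trivial_limit_at_right_real] by blast
  have "v - t *\<^sub>R z \<noteq> v + t *\<^sub>R z"
  proof
    assume "v - t *\<^sub>R z = v + t *\<^sub>R z"
    then have "(t + t) *\<^sub>R z = 0" by (simp only: scaleR_left_distrib) (simp add: algebra_simps)
    with t(1) \<open>z \<noteq> 0\<close> show False by simp
  qed
  moreover have "midpoint (v - t *\<^sub>R z) (v + t *\<^sub>R z) = v"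
    by (simp add: midpoint_def scaleR_add_right[symmetric])
  ultimately have "v \<in> open_segment (v - t *\<^sub>R z) (v + t *\<^sub>R z)"
    by (metis midpoint_in_open_segment)
  with v t show False by (auto simp: extreme_point_of_def)
qed

lemma rational_polytope_if_bounded:
  fixes a :: "'i \<Rightarrow> real^'n" and c :: "'i \<Rightarrow> real" and I :: "'i set"
  defines "Q \<equiv> {y. \<forall>i\<in>I. c i \<le> a i \<bullet> y}"
  assumes fin: "finite I" and ra: "\<forall>i\<in>I. rational_vec (a i)" and rc: "\<forall>i\<in>I. c i \<in> \<rat>"
    and "bounded Q"
  shows "rational_polytope Q"
proof -
  have "Q = \<Inter> ((\<lambda>i. {y. c i \<le> a i \<bullet> y}) ` I)" unfolding Q_def by auto
  then have polyQ: "polyhedron Q"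
    using fin by (auto intro!: polyhedron_Inter polyhedron_halfspace_ge)
  then have "compact Q"
    using \<open>bounded Q\<close> polyhedron_imp_closed by (simp add: compact_eq_bounded_closed)
  then have "Q = convex hull {v. v extreme_point_of Q}"
    using Krein_Milman_Minkowski polyhedron_imp_convex[OF polyQ] by blast
  moreover have "finite {v. v extreme_point_of Q}"
    using finite_polyhedron_extreme_points[OF polyQ] .
  moreover have "rational_vec v" if "v extreme_point_of Q" for v
  proof (rule rational_vec_unique_solution[where J = "{i\<in>I. a i \<bullet> v = c i}" and a = a and c = c])
    show "\<forall>z. (\<forall>i\<in>{i\<in>I. a i \<bullet> v = c i}. a i \<bullet> z = 0) \<longrightarrow> z = 0"
      using extreme_point_active_kernel[OF fin, of v c a] that unfolding Q_def by auto
  qed (use fin ra rc in auto)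
  ultimately show ?thesis unfolding rational_polytope_def by blast
qed

lemma pos_spanI: "\<forall>i\<in>T. 0 \<le> c i \<Longrightarrow> (\<Sum>i\<in>T. c i *\<^sub>R a i) \<in> pos_span T a"
  unfolding pos_span_def by blast

lemma convex_cone_pos_span: "convex_cone (pos_span T a)"
  unfolding convex_cone_def
proof (intro conjI)
  show "pos_span T a \<noteq> {}"
    using pos_spanI[of T "\<lambda>_. 0" a] by auto
  show "convex (pos_span T a)"
  proof (rule convexI)
    fix x y and u v :: real
    assume "x \<in> pos_span T a" "y \<in> pos_span T a" "0 \<le> u" "0 \<le> v" "u + v = 1"
    then obtain c d where "x = (\<Sum>i\<in>T. c i *\<^sub>R a i)" "\<forall>i\<in>T. 0 \<le> c i"
      and "y = (\<Sum>i\<in>T. d i *\<^sub>R a i)" "\<forall>i\<in>T. 0 \<le> d i" "0 \<le> u" "0 \<le> v"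
      unfolding pos_span_def by auto
    then show "u *\<^sub>R x + v *\<^sub>R y \<in> pos_span T a"
      using pos_spanI[of T "\<lambda>i. u * c i + v * d i" a]
      by (simp add: scaleR_sum_right sum.distrib scaleR_add_left)
  qed
  show "conic (pos_span T a)"
    unfolding conic_def
  proof (intro allI impI)
    fix x and u :: real
    assume "x \<in> pos_span T a" "0 \<le> u"
    then obtain c where "x = (\<Sum>i\<in>T. c i *\<^sub>R a i)" "\<forall>i\<in>T. 0 \<le> c i" "0 \<le> u"
      unfolding pos_span_def by auto
    then show "u *\<^sub>R x \<in> pos_span T a"
      using pos_spanI[of T "\<lambda>i. u * c i" a] by (simp add: scaleR_sum_right)
  qed
qed

lemma generator_in_pos_span:
  assumes "finite T" and "j \<in> T"
  shows "a j \<in> pos_span T a"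
  using pos_spanI[of T "\<lambda>i. if i = j then 1 else 0" a] assms
  by (simp add: if_distrib[of "\<lambda>r. r *\<^sub>R _"] sum.delta cong: if_cong)

lemma pos_span_separation:
  fixes a :: "nat \<Rightarrow> real^'n"
  assumes fin: "finite T" and w: "w \<notin> pos_span T a"
  obtains u where "u \<bullet> w < 0" and "\<forall>i\<in>T. 0 \<le> u \<bullet> a i"
proof -
  define D where "D = convex_cone hull (a ` T)"
  have "D \<subseteq> pos_span T a" unfolding D_def
    by (rule hull_minimal) (auto intro: generator_in_pos_span[OF fin] convex_cone_pos_span)
  with w have "w \<notin> D" by blast
  then obtain u \<beta> where u: "u \<bullet> w < \<beta>" "\<forall>z\<in>D. \<beta> < u \<bullet> z"
    using separating_hyperplane_closed_point convex_convex_cone_hull closed_convex_cone_hull fin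
    unfolding D_def by (metis finite_imageI)
  have "\<beta> < 0"
    using u(2) convex_cone_hull_contains_0 unfolding D_def by force
  have "\<forall>i\<in>T. 0 \<le> u \<bullet> a i"
  proof
    fix i assume "i \<in> T"
    show "0 \<le> u \<bullet> a i"
  proof (rule ccontr)
    assume neg: "\<not> 0 \<le> u \<bullet> a i"
    have "a i \<in> D" unfolding D_def using \<open>i \<in> T\<close> by (auto intro: hull_inc)
    moreover have "0 \<le> \<beta> / (u \<bullet> a i)"
      using \<open>\<beta> < 0\<close> neg by (simp add: divide_nonpos_neg)
    ultimately have "(\<beta> / (u \<bullet> a i)) *\<^sub>R a i \<in> D"
      unfolding D_def by (rule conicD[OF conic_convex_cone_hull])
    with u(2) have "\<beta> < (\<beta> / (u \<bullet> a i)) * (u \<bullet> a i)" by fastforce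
    with neg show False by simp
  qed
  qed
  with u(1) \<open>\<beta> < 0\<close> show ?thesis by (intro that[of u]) auto
qed

lemma bounded_if_pos_span_UNIV:
  fixes a :: "nat \<Rightarrow> real^'n"
  assumes fin: "finite T" and span: "pos_span T a = UNIV"
  shows "bounded {y. \<forall>i\<in>T. c i \<le> a i \<bullet> y}" (is "bounded ?Q")
proof -
  have "\<exists>L. \<forall>y\<in>?Q. L \<le> v \<bullet> y" for v
  proof -
    obtain d where v: "v = (\<Sum>i\<in>T. d i *\<^sub>R a i)" and d: "\<forall>i\<in>T. 0 \<le> d i"
      using span unfolding pos_span_def by blast
    have "(\<Sum>i\<in>T. d i * c i) \<le> v \<bullet> y" if "y \<in> ?Q" for y
    proof -
      have "(\<Sum>i\<in>T. d i * c i) \<le> (\<Sum>i\<in>T. d i * (a i \<bullet> y))"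
        using that d by (intro sum_mono mult_left_mono) auto
      also have "\<dots> = v \<bullet> y" by (simp add: v inner_sum_left)
      finally show ?thesis .
    qed
    then show ?thesis by blast
  qed
  then have "\<forall>v. \<exists>L. \<forall>y\<in>?Q. L \<le> v \<bullet> y" by blast
  then obtain L where "\<forall>v. \<forall>y\<in>?Q. L v \<le> v \<bullet> y" unfolding choice_iff by blast
  then have L: "L v \<le> v \<bullet> y" if "y \<in> ?Q" for v y using that by blast
  have "?Q \<subseteq> cbox (\<chi> j. L (axis j 1)) (\<chi> j. - L (- axis j 1))"
  proof
    fix y assume "y \<in> ?Q"
    then have "L (axis j 1) \<le> y $ j \<and> y $ j \<le> - L (- axis j 1)" for j
      using L[of y "axis j 1"] L[of y "- axis j 1"]
      by (simp add: inner_axis')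
    then show "y \<in> cbox (\<chi> j. L (axis j 1)) (\<chi> j. - L (- axis j 1))"
      by (simp add: mem_box_cart)
  qed
  then show ?thesis using bounded_cbox bounded_subset by blast
qed

lemma rel_interior_supporting_hyperplane:
  fixes S :: "'a::euclidean_space set"
  assumes "convex S" and "x \<in> rel_interior S" and "\<forall>y\<in>S. f \<bullet> x \<le> f \<bullet> y"
  shows "S \<subseteq> {y. f \<bullet> y = f \<bullet> x}"
proof -
  have "(S \<inter> {y. f \<bullet> y = f \<bullet> x}) face_of S"
    using assms(1,3) by (intro face_of_Int_supporting_hyperplane_ge) auto
  moreover have "x \<in> S \<inter> {y. f \<bullet> y = f \<bullet> x} \<inter> rel_interior S"
    using assms(2) rel_interior_subset by blast
  ultimately show ?thesis
    using subset_of_face_of[of _ S S] by blast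
qed

lemma pos_span_active_eq_perp:
  fixes a :: "nat \<Rightarrow> real^'n" and c :: "nat \<Rightarrow> real" and I :: "nat set"
  defines "C \<equiv> {y. \<forall>i\<in>I. c i \<le> a i \<bullet> y}"
  assumes fin: "finite I" and x: "x \<in> rel_interior C"
  shows "pos_span {i\<in>I. a i \<bullet> x = c i} a
           = perp {u - v |u v. u \<in> affine hull C \<and> v \<in> affine hull C}"
    (is "pos_span ?T a = perp ?K")
proof
  have xC: "x \<in> C" using x rel_interior_subset by blast
  have "C = (\<Inter>i\<in>I. {y. c i \<le> a i \<bullet> y})" unfolding C_def by auto
  then have convC: "convex C" by (simp add: convex_INT convex_halfspace_ge)
  have active_perp: "a i \<bullet> v = 0" if i: "i \<in> ?T" and v: "v \<in> ?K" for i v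
  proof -
    have "C \<subseteq> {y. a i \<bullet> y = c i}"
      using rel_interior_supporting_hyperplane[OF convC x, of "a i"] i xC unfolding C_def by auto
    then have "affine hull C \<subseteq> {y. a i \<bullet> y = c i}"
      by (rule hull_minimal) (rule affine_hyperplane)
    then have "a i \<bullet> u = c i" if "u \<in> affine hull C" for u using that by blast
    with v show ?thesis by (auto simp: inner_diff_right)
  qed
  show "pos_span ?T a \<subseteq> perp ?K"
  proof
    fix w assume "w \<in> pos_span ?T a"
    then obtain d where w: "w = (\<Sum>i\<in>?T. d i *\<^sub>R a i)" unfolding pos_span_def by blast
    have "w \<bullet> v = 0" if "v \<in> ?K" for v
    proof -
      have "w \<bullet> v = (\<Sum>i\<in>?T. d i * (a i \<bullet> v))" by (simp add: w inner_sum_left)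
      also have "\<dots> = 0" using active_perp[OF _ that] by (intro sum.neutral) simp
      finally show ?thesis .
    qed
    then show "w \<in> perp ?K" unfolding perp_def by blast
  qed
  show "perp ?K \<subseteq> pos_span ?T a"
  proof
    fix w assume w: "w \<in> perp ?K"
    show "w \<in> pos_span ?T a"
    proof (rule ccontr)
      assume "w \<notin> pos_span ?T a"
      then obtain u where u: "u \<bullet> w < 0" "\<forall>i\<in>?T. 0 \<le> u \<bullet> a i"
        using pos_span_separation[of ?T w a] fin by auto
      have "\<forall>\<^sub>F t in at_right 0. x + t *\<^sub>R u \<in> C"
        using eventually_feasible_direction[OF fin, of c a x u] xC u(2)
        unfolding C_def by (simp add: inner_commute)
      then have "\<forall>\<^sub>F t in at_right 0. 0 < t \<and> x + t *\<^sub>R u \<in> C"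
        by (intro eventually_conj eventually_at_right_less)
      then obtain t where t: "0 < t" "x + t *\<^sub>R u \<in> C"
        using eventually_happens'[OF trivial_limit_at_right_real] by blast
      then have "(x + t *\<^sub>R u) - x \<in> ?K" using xC by (blast intro: hull_inc)
      with w have "w \<bullet> ((x + t *\<^sub>R u) - x) = 0" unfolding perp_def by blast
      then have "t * (w \<bullet> u) = 0" by simp
      with t(1) u(1) show False by (simp add: inner_commute)
    qed
  qed
qed

lemma Pshift_eq:
  assumes "0 < m"
  shows "Pshift m a b s = {y. \<forall>i\<in>{..<m}. b i + s \<le> a i \<bullet> y}"
proof -
  have "s \<le> dP m a b y \<longleftrightarrow> (\<forall>i\<in>{..<m}. s \<le> dF a b i y)" for y
    unfolding dP_def using assms by (subst Min_ge_iff) auto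
  then show ?thesis by (auto simp: Pshift_def dF_def algebra_simps)
qed

lemma rational_vec_if_primitive_vec: "primitive_vec v \<Longrightarrow> rational_vec v"
  using Ints_subset_Rats unfolding primitive_vec_def integral_vec_def rational_vec_def by blast

theorem lemma2p2:
  fixes P :: "(real^'n) set" and m :: nat and a :: "nat \<Rightarrow> real^'n"
    and b :: "nat \<Rightarrow> real" and x :: "real^'n"
  assumes "rational_polytope P"
    and "aff_dim P = int CARD('n)"
    and "P = {y. \<forall>i<m. a i \<bullet> y \<ge> b i}"
    and "\<forall>i<m. primitive_vec (a i)"
    and "\<forall>i<m. b i \<in> \<rat>"
    and "\<forall>i<m. (P \<inter> {y. a i \<bullet> y = b i}) facet_of P"
    and "inj_on (\<lambda>i. P \<inter> {y. a i \<bullet> y = b i}) {..<m}"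
    and "x \<in> rel_interior (core m a b)"
  shows "pos_span {i. i < m \<and> dF a b i x = inverse (muQ m a b)} a = perp (Kspace m a b)
         \<and> (core m a b = {x} \<longrightarrow>
           rational_polytope {y. \<forall>i. i < m \<and> dF a b i x = inverse (muQ m a b) \<longrightarrow> dF a b i y \<ge> 0}
           \<and> P \<subseteq> {y. \<forall>i. i < m \<and> dF a b i x = inverse (muQ m a b) \<longrightarrow> dF a b i y \<ge> 0})"
proof -
  define s where "s = inverse (muQ m a b)"
  define T where "T = {i\<in>{..<m}. a i \<bullet> x = b i + s}"
  have active_iff: "i < m \<and> dF a b i x = s \<longleftrightarrow> i \<in> T" for i
    unfolding T_def dF_def by auto
  have "0 < m"
  proof (rule ccontr)
    assume "\<not> 0 < m"
    with assms(3) have "P = UNIV" by simp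
    moreover have "bounded P"
      using assms(1) finite_imp_bounded_convex_hull unfolding rational_polytope_def by blast
    ultimately show False by simp
  qed
  then have core: "core m a b = {y. \<forall>i\<in>{..<m}. b i + s \<le> a i \<bullet> y}"
    unfolding core_def s_def by (rule Pshift_eq)
  have span: "pos_span T a = perp (Kspace m a b)"
    using pos_span_active_eq_perp[where I = "{..<m}" and c = "\<lambda>i. b i + s" and a = a and x = x] assms(8)
    unfolding Kspace_def core T_def by simp
  have "rational_polytope {y. \<forall>i\<in>T. b i \<le> a i \<bullet> y}" if "core m a b = {x}"
  proof (rule rational_polytope_if_bounded)
    have "Kspace m a b = {0}" unfolding Kspace_def that by auto
    with span have "pos_span T a = UNIV" unfolding perp_def by auto
    then show "bounded {y. \<forall>i\<in>T. b i \<le> a i \<bullet> y}"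
      by (intro bounded_if_pos_span_UNIV) (simp_all add: T_def)
  qed (use assms(4,5) rational_vec_if_primitive_vec in \<open>auto simp: T_def\<close>)
  moreover have "P \<subseteq> {y. \<forall>i\<in>T. b i \<le> a i \<bullet> y}"
    using assms(3) by (auto simp: T_def)
  ultimately show ?thesis
    unfolding s_def[symmetric] active_iff using span by (simp add: dF_def Ball_def)
qed

end
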